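(* Let $f$ and $g$ be multiplicative functions with $|f(n)|,|g(n)|\le1$ for all $n$, and let $h$ be defined by $g=f*h$. Suppose $\mathbb{D}_\beta(f,g)<\infty$ for some $\beta>0$, and let $\sigma>1/2$ with $\sigma\ge\beta$. Then the series $\sum_{n=1}^\infty\frac{|h(n)|^2}{n^\sigma}$ converges if the quantity $H(\sigma)$ is finite.
   Context: $(f*h)(n)=\sum_{dm=n}f(d)h(m)$. $\mathbb{D}_\beta(f,g)^2:=\sum_p \frac{1-\Re(f(p)\overline{g(p)})}{p^\beta}$ (sum over primes). $H(\sigma):=\sum_{p\le 4^{1/\sigma}}\sum_{k=0}^\infty \frac{|h(p^k)|^2}{p^{k\sigma}}$. *)

theory Defs
  imports "HOL-Analysis.Analysis" "HOL-Computational_Algebra.Primes"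
begin

text \<open>Multiplicative arithmetic function (values at 0 are irrelevant).\<close>
definition multiplicative :: "(nat \<Rightarrow> complex) \<Rightarrow> bool" where
  "multiplicative f \<longleftrightarrow> f 1 = 1 \<and> (\<forall>m n. m > 0 \<longrightarrow> n > 0 \<longrightarrow> coprime m n \<longrightarrow> f (m * n) = f m * f n)"

definition dirichlet_conv :: "(nat \<Rightarrow> complex) \<Rightarrow> (nat \<Rightarrow> complex) \<Rightarrow> nat \<Rightarrow> complex" where
  "dirichlet_conv f h n = (\<Sum>d | d dvd n. f d * h (n div d))"

text \<open>D_beta(f,g)^2 < infinity: the prime series converges (terms are nonnegative).\<close>
definition D_finite :: "real \<Rightarrow> (nat \<Rightarrow> complex) \<Rightarrow> (nat \<Rightarrow> complex) \<Rightarrow> bool" where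
  "D_finite \<beta> f g \<longleftrightarrow>
     (\<lambda>p. (1 - Re (f p * cnj (g p))) / real p powr \<beta>) summable_on {p. prime p}"

text \<open>H(sigma) < infinity: each of the finitely many inner series over k converges.\<close>
definition H_finite :: "(nat \<Rightarrow> complex) \<Rightarrow> real \<Rightarrow> bool" where
  "H_finite h \<sigma> \<longleftrightarrow>
     (\<forall>p. prime p \<and> real p \<le> 4 powr (1 / \<sigma>) \<longrightarrow>
        summable (\<lambda>k. (cmod (h (p ^ k)))\<^sup>2 / real p powr (real k * \<sigma>)))"

end

theory Submission
  imports Defs
begin

text \<open>From \<open>g = f * h\<close> with \<open>f\<close>, \<open>g\<close> multiplicative and \<open>f(1) = 1\<close>, the function \<open>h\<close> is multiplicative,
  hence so is the weight \<open>a(n) = |h(n)|\<^sup>2 / n\<^sup>\<sigma>\<close>. A nonnegative multiplicative function is summable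
  as soon as its local factors \<open>\<Sum>\<^sub>k a(p\<^sup>k)\<close> are bounded by \<open>1 + U(p)\<close> with \<open>\<Sum>\<^sub>p U(p) < \<infinity>\<close>, because
  every finite partial sum is dominated by an Euler product \<open>\<Prod>\<^sub>p (1 + U(p)) \<le> exp (\<Sum>\<^sub>p U(p))\<close>.
  For the finitely many primes with \<open>p\<^sup>\<sigma> \<le> 4\<close> the local factor is finite because \<open>H(\<sigma>) < \<infinity>\<close>.
  For the others, \<open>h(p) = g(p) - f(p)\<close> gives \<open>|h(p)|\<^sup>2 \<le> 2 (1 - Re (f(p) g(p)\<^sup>*))\<close>, and the
  recursion \<open>h(p\<^sup>k) = g(p\<^sup>k) - \<Sum>\<^sub>j\<^sub>\<ge>\<^sub>1 f(p\<^sup>j) h(p\<^sup>k\<^sup>-\<^sup>j)\<close> gives \<open>|h(p\<^sup>k)| \<le> 2\<^sup>k\<close>, so the tail of the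
  local factor is a geometric series in \<open>4/p\<^sup>\<sigma>\<close>. Hence \<open>U(p)\<close> is at most twice the summand of
  \<open>\<bbbD>\<^sub>\<beta>(f,g)\<^sup>2\<close> (using \<open>\<sigma> \<ge> \<beta>\<close>) plus \<open>O(p\<^sup>-\<^sup>2\<^sup>\<sigma>)\<close>, which is summable since \<open>2\<sigma> > 1\<close>.\<close>

lemma divisors_prime_power:
  fixes p :: nat assumes "prime p"
  shows "{d. d dvd p ^ k} = (\<lambda>j. p ^ j) ` {..k}"
  using divides_primepow_nat[OF assms] by auto

lemma dirichlet_conv_prime_power:
  fixes p :: nat assumes p: "prime p"
  shows "dirichlet_conv f h (p ^ k) = (\<Sum>j\<le>k. f (p ^ j) * h (p ^ (k - j)))"
proof -
  have "inj_on (\<lambda>j. p ^ j) {..k}"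
    using prime_gt_1_nat[OF p] by (auto simp: inj_on_def)
  then have "dirichlet_conv f h (p ^ k) = (\<Sum>j\<le>k. f (p ^ j) * h (p ^ k div p ^ j))"
    unfolding dirichlet_conv_def divisors_prime_power[OF p] by (simp add: sum.reindex)
  also have "\<dots> = (\<Sum>j\<le>k. f (p ^ j) * h (p ^ (k - j)))"
    using p by (intro sum.cong refl) (simp add: power_diff prime_gt_0_nat)
  finally show ?thesis .
qed

lemma divisors_mult:
  fixes m n :: nat
  shows "{d. d dvd m * n} = (\<lambda>(a, b). a * b) ` ({a. a dvd m} \<times> {b. b dvd n})"
proof (intro equalityI subsetI)
  fix d assume "d \<in> {d. d dvd m * n}"
  then show "d \<in> (\<lambda>(a, b). a * b) ` ({a. a dvd m} \<times> {b. b dvd n})"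
    using division_decomp[of d m n] by auto
qed (auto intro: mult_dvd_mono)

lemma inj_on_mult_divisors_coprime:
  fixes m n :: nat
  assumes mn: "coprime m n" and "m > 0"
  shows "inj_on (\<lambda>(a, b). a * b) ({a. a dvd m} \<times> {b. b dvd n})"
proof (intro inj_onI, clarify)
  have m_part: "gcd (a * b) m = a" if "a dvd m" "b dvd n" for a b
  proof -
    have "coprime m b"
      using coprime_divisors[OF dvd_refl that(2) mn] .
    then show ?thesis
      using that(1) by (simp add: gcd_mult_left_right_cancel gcd_proj1_if_dvd_nat)
  qed
  fix a b a' b' :: nat
  assume *: "a dvd m" "b dvd n" "a' dvd m" "b' dvd n" and eq: "a * b = a' * b'"
  then have "a = a'"
    using m_part by metis
  moreover have "a > 0"
    using *(1) \<open>m > 0\<close> by (auto intro: dvd_pos_nat)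
  ultimately show "a = a' \<and> b = b'"
    using eq by simp
qed

lemma sum_divisors_mult_coprime:
  fixes m n :: nat and \<phi> :: "nat \<Rightarrow> 'a::comm_monoid_add"
  assumes "coprime m n" and "m > 0"
  shows "(\<Sum>d | d dvd m * n. \<phi> d) = (\<Sum>(a, b) \<in> {a. a dvd m} \<times> {b. b dvd n}. \<phi> (a * b))"
  unfolding divisors_mult using inj_on_mult_divisors_coprime[OF assms]
  by (simp add: sum.reindex case_prod_unfold)

lemma dirichlet_conv_mult_coprime:
  assumes f: "multiplicative f" and mn: "coprime m n" "m > 0" "n > 0"
  shows "dirichlet_conv f h (m * n)
    = (\<Sum>(a, b) \<in> {a. a dvd m} \<times> {b. b dvd n}. f a * f b * h (m div a * (n div b)))"
  unfolding dirichlet_conv_def sum_divisors_mult_coprime[OF mn(1,2)]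
proof (intro sum.cong refl, clarify)
  fix a b assume ab: "a dvd m" "b dvd n"
  then have "a > 0" "b > 0" "coprime a b"
    using mn by (auto intro: dvd_pos_nat coprime_divisors)
  then have "f (a * b) = f a * f b"
    using f by (simp add: multiplicative_def)
  moreover have "m * n div (a * b) = m div a * (n div b)"
    using ab by (simp add: div_mult_div_if_dvd)
  ultimately show "f (a * b) * h (m * n div (a * b)) = f a * f b * h (m div a * (n div b))"
    by simp
qed

lemma dirichlet_conv_times_dirichlet_conv:
  "dirichlet_conv f h m * dirichlet_conv f h n
    = (\<Sum>(a, b) \<in> {a. a dvd m} \<times> {b. b dvd n}. f a * f b * (h (m div a) * h (n div b)))"
  unfolding dirichlet_conv_def sum_product sum.cartesian_product
  by (intro sum.cong refl) (auto simp: algebra_simps)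

lemma multiplicative_conv_factor:
  assumes f: "multiplicative f" and g: "multiplicative g"
    and conv: "\<And>n. n > 0 \<Longrightarrow> g n = dirichlet_conv f h n"
  shows "multiplicative h"
proof -
  have f1: "f 1 = 1" and g1: "g 1 = 1"
    using f g by (simp_all add: multiplicative_def)
  have h1: "h 1 = 1"
    using conv[of 1] f1 g1 by (simp add: dirichlet_conv_def)
  have "h (m * n) = h m * h n" if "m > 0" "n > 0" "coprime m n" for m n
    using that
  proof (induction "m * n" arbitrary: m n rule: less_induct)
    case (less m n)
    define D where "D = {a. a dvd m} \<times> {b. b dvd n}"
    define X where "X = (\<lambda>(a, b). f a * f b * h (m div a * (n div b)))"
    define Y where "Y = (\<lambda>(a, b). f a * f b * (h (m div a) * h (n div b)))"
    \<comment> \<open>expanding \<open>g(m n) = g(m) g(n)\<close> by both formulas, all terms except \<open>(1, 1)\<close> agree by induction\<close>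
    have "sum X D = sum Y D"
      using conv less.prems g
      by (simp add: X_def Y_def D_def multiplicative_def dirichlet_conv_mult_coprime[OF f]
          flip: dirichlet_conv_times_dirichlet_conv)
    moreover have "X x = Y x" if x: "x \<in> D - {(1, 1)}" for x
    proof -
      obtain a b where x_eq: "x = (a, b)" and ab: "a dvd m" "b dvd n" "(a, b) \<noteq> (1, 1)"
        using x by (cases x) (auto simp: D_def)
      have "a * b \<noteq> 1" "a * b \<noteq> 0"
        using ab less.prems by auto
      then have "a * b > 1"
        by linarith
      then have "m * n div (a * b) < m * n"
        using less.prems by (intro div_less_dividend) auto
      then have lt: "m div a * (n div b) < m * n"
        using ab by (simp add: div_mult_div_if_dvd)
      have "m div a dvd m" "n div b dvd n"
        using ab by (metis dvd_mult_div_cancel dvd_triv_right)+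
      then have "coprime (m div a) (n div b)"
        using less.prems(3) by (rule coprime_divisors)
      moreover have "m div a > 0" "n div b > 0"
        using ab less.prems by (auto simp: dvd_div_eq_0_iff)
      ultimately show ?thesis
        using less.hyps[OF lt] by (simp add: X_def Y_def x_eq)
    qed
    moreover have "finite D" "(1, 1) \<in> D"
      using less.prems by (auto simp: D_def)
    ultimately have "X (1, 1) = Y (1, 1)"
      by (simp add: sum.remove)
    then show ?case
      using f1 by (simp add: X_def Y_def)
  qed
  with h1 show ?thesis
    by (simp add: multiplicative_def)
qed

definition smooth_upto :: "nat set \<Rightarrow> nat \<Rightarrow> nat set" where
  "smooth_upto P N = {n. 0 < n \<and> n \<le> N \<and> prime_factors n \<subseteq> P}"

lemma finite_smooth_upto [simp]: "finite (smooth_upto P N)"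
  unfolding smooth_upto_def by (rule finite_subset[of _ "{..N}"]) auto

lemma smooth_upto_insert_subset:
  fixes q :: nat
  assumes q: "prime q"
  shows "smooth_upto (insert q P) N \<subseteq> (\<lambda>(k, m). q ^ k * m) ` ({..N} \<times> smooth_upto P N)"
proof
  fix n assume n: "n \<in> smooth_upto (insert q P) N"
  then have n_pos: "n > 0" and n_le: "n \<le> N"
    by (auto simp: smooth_upto_def)
  define k where "k = multiplicity q n"
  define m where "m = n div q ^ k"
  have q1: "q > 1"
    using q prime_gt_1_nat by blast
  have n_eq: "n = q ^ k * m"
    unfolding m_def k_def using multiplicity_dvd[of q n] by simp
  have m_pos: "m > 0"
    using n_eq n_pos by (cases m) auto
  have "\<not> q dvd m"
    unfolding m_def k_def by (rule multiplicity_decompose) (use n_pos q1 in auto)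
  moreover have "prime_factors m \<subseteq> prime_factors n"
    using n_eq n_pos m_pos by (auto simp: in_prime_factors_iff)
  ultimately have "prime_factors m \<subseteq> P"
    using n unfolding smooth_upto_def by (auto simp: in_prime_factors_iff)
  moreover have "m \<le> N"
    using n_eq q1 n_le by (simp add: order_trans[of m n N])
  ultimately have "m \<in> smooth_upto P N"
    using m_pos by (simp add: smooth_upto_def)
  moreover have "k \<le> N"
  proof -
    have "k < 2 ^ k" by (rule less_exp)
    also have "(2::nat) ^ k \<le> q ^ k" using q1 by (intro power_mono) auto
    also have "q ^ k \<le> n" using n_eq m_pos by simp
    finally show ?thesis using n_le by simp
  qed
  ultimately show "n \<in> (\<lambda>(k, m). q ^ k * m) ` ({..N} \<times> smooth_upto P N)"
    using n_eq by force
qed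

lemma sum_smooth_upto_le_prod:
  fixes a :: "nat \<Rightarrow> real"
  assumes nonneg: "\<And>n. a n \<ge> 0" and a1: "a 1 = 1"
    and mult: "\<And>m n. m > 0 \<Longrightarrow> n > 0 \<Longrightarrow> coprime m n \<Longrightarrow> a (m * n) = a m * a n"
    and "finite P" and "\<forall>p\<in>P. prime p"
  shows "(\<Sum>n\<in>smooth_upto P N. a n) \<le> (\<Prod>p\<in>P. \<Sum>k\<le>N. a (p ^ k))"
  using assms(4,5)
proof (induction P rule: finite_induct)
  case empty
  have "smooth_upto {} N \<subseteq> {1}"
    by (auto simp: smooth_upto_def prime_factorization_empty_iff)
  then have "(\<Sum>n\<in>smooth_upto {} N. a n) \<le> (\<Sum>n\<in>{1}. a n)"
    by (intro sum_mono2) (auto simp: nonneg)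
  then show ?case
    using a1 by simp
next
  case (insert q P)
  have q: "prime q"
    using insert.prems by simp
  have coprime_q_power: "coprime (q ^ k) m" if "m \<in> smooth_upto P N" for k m
  proof -
    have "\<not> q dvd m"
      using that q insert.hyps(2) by (auto simp: smooth_upto_def in_prime_factors_iff)
    then show ?thesis
      using q by (simp add: prime_imp_coprime)
  qed
  have "(\<Sum>n\<in>smooth_upto (insert q P) N. a n)
        \<le> (\<Sum>n\<in>(\<lambda>(k, m). q ^ k * m) ` ({..N} \<times> smooth_upto P N). a n)"
    by (intro sum_mono2 smooth_upto_insert_subset q) (auto simp: nonneg)
  also have "\<dots> \<le> (\<Sum>(k, m)\<in>{..N} \<times> smooth_upto P N. a (q ^ k * m))"
    by (rule order_trans[OF sum_image_le]) (auto simp: nonneg case_prod_unfold)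
  also have "\<dots> = (\<Sum>(k, m)\<in>{..N} \<times> smooth_upto P N. a (q ^ k) * a m)"
  proof (intro sum.cong refl, clarify)
    fix k m assume "k \<le> N" "m \<in> smooth_upto P N"
    then show "a (q ^ k * m) = a (q ^ k) * a m"
      using q by (intro mult coprime_q_power) (auto simp: smooth_upto_def prime_gt_0_nat)
  qed
  also have "\<dots> = (\<Sum>k\<le>N. a (q ^ k)) * (\<Sum>m\<in>smooth_upto P N. a m)"
    by (simp add: sum_product sum.cartesian_product)
  also have "\<dots> \<le> (\<Sum>k\<le>N. a (q ^ k)) * (\<Prod>p\<in>P. \<Sum>k\<le>N. a (p ^ k))"
    using insert.IH insert.prems by (intro mult_left_mono sum_nonneg nonneg) auto
  also have "\<dots> = (\<Prod>p\<in>insert q P. \<Sum>k\<le>N. a (p ^ k))"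
    using insert.hyps by simp
  finally show ?case .
qed

lemma subset_smooth_upto_primes:
  assumes "F \<subseteq> {1..N}"
  shows "F \<subseteq> smooth_upto {p. prime p \<and> p \<le> N} N"
proof
  fix n assume "n \<in> F"
  then have n: "n > 0" "n \<le> N"
    using assms by auto
  moreover have "prime_factors n \<subseteq> {p. prime p \<and> p \<le> N}"
  proof
    fix q assume q: "q \<in> prime_factors n"
    then have "q \<le> n"
      using n by (auto simp: in_prime_factors_iff intro: dvd_imp_le)
    with q n show "q \<in> {p. prime p \<and> p \<le> N}"
      by (auto simp: in_prime_factors_iff)
  qed
  ultimately show "n \<in> smooth_upto {p. prime p \<and> p \<le> N} N"
    by (simp add: smooth_upto_def)
qed

lemma summable_on_nonneg_multiplicativeI:
  fixes a U :: "nat \<Rightarrow> real"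
  assumes nonneg: "\<And>n. a n \<ge> 0" and a1: "a 1 = 1"
    and mult: "\<And>m n. m > 0 \<Longrightarrow> n > 0 \<Longrightarrow> coprime m n \<Longrightarrow> a (m * n) = a m * a n"
    and U: "summable U" "\<And>n. U n \<ge> 0"
    and euler_factor: "\<And>p K. prime p \<Longrightarrow> (\<Sum>k\<le>K. a (p ^ k)) \<le> 1 + U p"
  shows "a summable_on {1..}"
proof (rule nonneg_bdd_above_summable_on)
  have "sum a F \<le> exp (suminf U)" if F: "finite F" "F \<subseteq> {1..}" for F
  proof -
    define N where "N = Max (insert 0 F)"
    define P where "P = {p. prime p \<and> p \<le> N}"
    have "finite P"
      unfolding P_def by (rule finite_subset[of _ "{..N}"]) auto
    have "F \<subseteq> {1..N}"
      using F by (auto simp: N_def)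
    then have "sum a F \<le> (\<Sum>n\<in>smooth_upto P N. a n)"
      unfolding P_def by (intro sum_mono2 subset_smooth_upto_primes) (auto simp: nonneg)
    also have "\<dots> \<le> (\<Prod>p\<in>P. \<Sum>k\<le>N. a (p ^ k))"
      by (rule sum_smooth_upto_le_prod[OF nonneg a1 mult \<open>finite P\<close>]) (auto simp: P_def)
    also have "\<dots> \<le> (\<Prod>p\<in>P. 1 + U p)"
      by (intro prod_mono conjI sum_nonneg nonneg euler_factor) (auto simp: P_def)
    also have "\<dots> \<le> exp (sum U P)"
      by (intro prod_le_exp_sum U)
    also have "\<dots> \<le> exp (suminf U)"
      using U \<open>finite P\<close> by (simp add: sum_le_suminf)
    finally show ?thesis .
  qed
  then show "bdd_above (sum a ` {F. F \<subseteq> {1..} \<and> finite F})"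
    by (intro bdd_aboveI2[where M = "exp (suminf U)"]) auto
qed (simp add: nonneg)

lemma sum_atMost_le_geometric_tail:
  fixes b :: "nat \<Rightarrow> real"
  assumes nonneg: "\<And>k. b k \<ge> 0" and geometric: "\<And>k. k \<ge> 2 \<Longrightarrow> b k \<le> r ^ k"
    and "0 \<le> r" "r < 1"
  shows "(\<Sum>k\<le>K. b k) \<le> b 0 + b 1 + r\<^sup>2 / (1 - r)"
proof -
  have "(\<Sum>k\<le>K. b k) \<le> (\<Sum>k\<in>{0, 1} \<union> {2..K}. b k)"
    by (intro sum_mono2) (auto simp: nonneg)
  also have "\<dots> = b 0 + b 1 + (\<Sum>k=2..K. b k)"
    by (subst sum.union_disjoint) auto
  finally have split: "(\<Sum>k\<le>K. b k) \<le> b 0 + b 1 + (\<Sum>k=2..K. b k)" .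
  have "(\<Sum>k=2..K. b k) \<le> (\<Sum>k=2..K. r ^ k)"
    by (intro sum_mono geometric) auto
  also have "\<dots> \<le> r\<^sup>2 / (1 - r)"
    using assms(3,4) by (auto simp: sum_gp power2_eq_square intro!: divide_right_mono)
  finally show ?thesis
    using split by linarith
qed

lemma Re_mult_cnj_le_1:
  assumes "cmod z \<le> 1" "cmod w \<le> 1"
  shows "Re (z * cnj w) \<le> 1"
proof -
  have "Re (z * cnj w) \<le> cmod z * cmod w"
    using complex_Re_le_cmod[of "z * cnj w"] by (simp add: norm_mult)
  also have "\<dots> \<le> 1"
    using assms by (simp add: mult_le_one)
  finally show ?thesis .
qed

lemma cmod_diff_squared_le:
  assumes "cmod z \<le> 1" "cmod w \<le> 1"
  shows "(cmod (w - z))\<^sup>2 \<le> 2 * (1 - Re (z * cnj w))"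
proof -
  have "(cmod (w - z))\<^sup>2 = (cmod w)\<^sup>2 + (cmod z)\<^sup>2 - 2 * Re (z * cnj w)"
    unfolding cmod_power2 by (simp add: power2_eq_square algebra_simps)
  moreover have "(cmod w)\<^sup>2 \<le> 1" "(cmod z)\<^sup>2 \<le> 1"
    using assms by (auto simp: power_le_one)
  ultimately show ?thesis
    by simp
qed

lemma powr_of_nat_power:
  fixes p k :: nat
  assumes "p > 0"
  shows "real (p ^ k) powr \<sigma> = (real p powr \<sigma>) ^ k"
  using assms by (simp add: powr_realpow[symmetric] powr_powr mult.commute flip: powr_power)

lemma powr_of_nat_mult:
  fixes p k :: nat
  assumes "p > 0"
  shows "real p powr (real k * \<sigma>) = (real p powr \<sigma>) ^ k"
  using assms by (simp add: powr_realpow[symmetric] powr_powr mult.commute)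

locale bounded_conv_factor =
  fixes f g h :: "nat \<Rightarrow> complex"
  assumes multiplicative_f: "multiplicative f" and multiplicative_g: "multiplicative g"
    and norm_f_le_1: "\<And>n. n > 0 \<Longrightarrow> cmod (f n) \<le> 1"
    and norm_g_le_1: "\<And>n. n > 0 \<Longrightarrow> cmod (g n) \<le> 1"
    and g_eq_conv: "\<And>n. n > 0 \<Longrightarrow> g n = dirichlet_conv f h n"
begin

lemma multiplicative_h: "multiplicative h"
  using multiplicative_conv_factor multiplicative_f multiplicative_g g_eq_conv .

lemma f_1: "f 1 = 1" and h_1: "h 1 = 1"
  using multiplicative_f multiplicative_h by (simp_all add: multiplicative_def)

lemma h_prime:
  assumes p: "prime p"
  shows "h p = g p - f p"
proof -
  have "g p = dirichlet_conv f h (p ^ 1)"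
    using g_eq_conv[of p] p by (simp add: prime_gt_0_nat)
  also have "\<dots> = f 1 * h p + f p * h 1"
    by (subst dirichlet_conv_prime_power[OF p]) simp
  finally show ?thesis
    unfolding f_1 h_1 by simp
qed

lemma norm_h_prime_power_le:
  assumes p: "prime p"
  shows "cmod (h (p ^ k)) \<le> 2 ^ k"
proof (induction k rule: less_induct)
  case (less k)
  have p_pow_pos: "p ^ j > 0" for j
    using p prime_gt_0_nat by simp
  have "g (p ^ k) = f 1 * h (p ^ k) + (\<Sum>j\<in>{1..k}. f (p ^ j) * h (p ^ (k - j)))"
  proof -
    have "{..k} = insert 0 {1..k}"
      by auto
    then show ?thesis
      using g_eq_conv[OF p_pow_pos] by (simp add: dirichlet_conv_prime_power[OF p])
  qed
  then have h_eq: "h (p ^ k) = g (p ^ k) - (\<Sum>j\<in>{1..k}. f (p ^ j) * h (p ^ (k - j)))"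
    by (simp only: f_1 mult_1) simp
  have "cmod (h (p ^ k)) \<le> cmod (g (p ^ k)) + (\<Sum>j\<in>{1..k}. cmod (f (p ^ j)) * cmod (h (p ^ (k - j))))"
    unfolding h_eq by (rule order_trans[OF norm_triangle_ineq4]) (simp add: sum_norm_le norm_mult)
  also have "\<dots> \<le> 1 + (\<Sum>j\<in>{1..k}. 1 * 2 ^ (k - j))"
    using less by (intro add_mono sum_mono mult_mono norm_f_le_1 norm_g_le_1 p_pow_pos) auto
  also have "(\<Sum>j\<in>{1..k}. 1 * (2::real) ^ (k - j)) = (\<Sum>i<k. 2 ^ i)"
    by (rule sum.reindex_bij_witness[where i="\<lambda>i. k - i" and j="\<lambda>j. k - j"]) auto
  also have "(\<Sum>i<k. (2::real) ^ i) = 2 ^ k - 1"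
    by (induction k) auto
  finally show ?case
    by simp
qed

definition h_weight :: "real \<Rightarrow> nat \<Rightarrow> real" where
  "h_weight \<sigma> n = (cmod (h n))\<^sup>2 / real n powr \<sigma>"

lemma h_weight_nonneg: "h_weight \<sigma> n \<ge> 0"
  by (simp add: h_weight_def)

lemma h_weight_1: "h_weight \<sigma> 1 = 1"
  unfolding h_weight_def h_1 by simp

lemma h_weight_mult:
  assumes "m > 0" "n > 0" "coprime m n"
  shows "h_weight \<sigma> (m * n) = h_weight \<sigma> m * h_weight \<sigma> n"
  using multiplicative_h assms
  by (simp add: h_weight_def multiplicative_def norm_mult power_mult_distrib powr_mult)

lemma h_weight_prime_power_le:
  assumes "prime p"
  shows "h_weight \<sigma> (p ^ k) \<le> (4 / real p powr \<sigma>) ^ k"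
proof -
  have "(cmod (h (p ^ k)))\<^sup>2 \<le> (2 ^ k)\<^sup>2"
    using norm_h_prime_power_le[OF assms] by (intro power_mono) auto
  also have "((2::real) ^ k)\<^sup>2 = 4 ^ k"
    unfolding power2_eq_square power_mult_distrib[symmetric] by simp
  finally have "(cmod (h (p ^ k)))\<^sup>2 \<le> 4 ^ k" .
  then show ?thesis
    unfolding h_weight_def powr_of_nat_power[OF prime_gt_0_nat[OF assms]] power_divide
    by (rule divide_right_mono) simp
qed

definition pretentious_term :: "real \<Rightarrow> nat \<Rightarrow> real" where
  "pretentious_term \<beta> p = (1 - Re (f p * cnj (g p))) / real p powr \<beta>"

lemma pretentious_term_nonneg:
  assumes "p > 0"
  shows "pretentious_term \<beta> p \<ge> 0"
  using Re_mult_cnj_le_1[OF norm_f_le_1[OF assms] norm_g_le_1[OF assms]]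
  by (simp add: pretentious_term_def)

lemma h_weight_prime_le:
  assumes p: "prime p" and "\<beta> \<le> \<sigma>"
  shows "h_weight \<sigma> p \<le> 2 * pretentious_term \<beta> p"
proof -
  have p_pos: "p > 0"
    using p prime_gt_0_nat by blast
  have Re_le: "Re (f p * cnj (g p)) \<le> 1"
    using Re_mult_cnj_le_1[OF norm_f_le_1[OF p_pos] norm_g_le_1[OF p_pos]] .
  have "(cmod (h p))\<^sup>2 \<le> 2 * (1 - Re (f p * cnj (g p)))"
    unfolding h_prime[OF p] using cmod_diff_squared_le[OF norm_f_le_1[OF p_pos] norm_g_le_1[OF p_pos]] .
  then have "h_weight \<sigma> p \<le> 2 * (1 - Re (f p * cnj (g p))) / real p powr \<sigma>"
    unfolding h_weight_def by (rule divide_right_mono) simp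
  also have "\<dots> \<le> 2 * (1 - Re (f p * cnj (g p))) / real p powr \<beta>"
    using Re_le p_pos \<open>\<beta> \<le> \<sigma>\<close> by (intro divide_left_mono powr_mono mult_pos_pos) auto
  finally show ?thesis
    by (simp add: pretentious_term_def)
qed

lemma sum_h_weight_prime_powers_le_geometric:
  assumes p: "prime p" and "\<beta> \<le> \<sigma>" and large: "4 < real p powr \<sigma>"
  shows "(\<Sum>k\<le>K. h_weight \<sigma> (p ^ k))
    \<le> 1 + 2 * pretentious_term \<beta> p + (4 / real p powr \<sigma>)\<^sup>2 / (1 - 4 / real p powr \<sigma>)"
proof -
  have "(\<Sum>k\<le>K. h_weight \<sigma> (p ^ k))
      \<le> h_weight \<sigma> (p ^ 0) + h_weight \<sigma> (p ^ 1) + (4 / real p powr \<sigma>)\<^sup>2 / (1 - 4 / real p powr \<sigma>)"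
    using large by (intro sum_atMost_le_geometric_tail h_weight_nonneg h_weight_prime_power_le p)
      (auto simp: divide_less_eq)
  then show ?thesis
    using h_weight_prime_le[OF assms(1,2)] by (simp only: power_0 power_one_right h_weight_1)
qed

lemma summable_h_weight_prime_powers:
  assumes H: "H_finite h \<sigma>" and "\<sigma> > 0" and p: "prime p" and small: "real p powr \<sigma> \<le> 4"
  shows "summable (\<lambda>k. h_weight \<sigma> (p ^ k))"
proof -
  have p_pos: "p > 0"
    using p prime_gt_0_nat by blast
  have "real p = (real p powr \<sigma>) powr (1 / \<sigma>)"
    using \<open>\<sigma> > 0\<close> by (simp add: powr_powr)
  also have "\<dots> \<le> 4 powr (1 / \<sigma>)"
    using small \<open>\<sigma> > 0\<close> by (intro powr_mono2) auto
  finally have "summable (\<lambda>k. (cmod (h (p ^ k)))\<^sup>2 / real p powr (real k * \<sigma>))"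
    using H p unfolding H_finite_def by blast
  then show ?thesis
    by (simp only: h_weight_def powr_of_nat_power[OF p_pos] powr_of_nat_mult[OF p_pos])
qed

definition euler_factor_bound :: "real \<Rightarrow> real \<Rightarrow> nat \<Rightarrow> real" where
  "euler_factor_bound \<beta> \<sigma> p =
     (if \<not> prime p then 0
      else if real p powr \<sigma> \<le> 4 then (\<Sum>k. h_weight \<sigma> (p ^ k))
      else 2 * pretentious_term \<beta> p + (4 / real p powr \<sigma>)\<^sup>2 / (1 - 4 / real p powr \<sigma>))"

lemma euler_factor_bound_nonneg:
  assumes "H_finite h \<sigma>" and "\<sigma> > 0"
  shows "euler_factor_bound \<beta> \<sigma> p \<ge> 0"
  using summable_h_weight_prime_powers[OF assms] pretentious_term_nonneg[of p \<beta>]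
  by (auto simp: euler_factor_bound_def prime_gt_0_nat h_weight_nonneg suminf_nonneg)

lemma sum_h_weight_prime_powers_le:
  assumes "H_finite h \<sigma>" and "\<sigma> > 0" and "\<beta> \<le> \<sigma>" and p: "prime p"
  shows "(\<Sum>k\<le>K. h_weight \<sigma> (p ^ k)) \<le> 1 + euler_factor_bound \<beta> \<sigma> p"
proof (cases "real p powr \<sigma> \<le> 4")
  case True
  then have "(\<Sum>k\<le>K. h_weight \<sigma> (p ^ k)) \<le> (\<Sum>k. h_weight \<sigma> (p ^ k))"
    using summable_h_weight_prime_powers[OF assms(1,2) p] by (intro sum_le_suminf) (auto simp: h_weight_nonneg)
  then show ?thesis
    using True p by (simp add: euler_factor_bound_def)
next
  case False
  then show ?thesis
    using sum_h_weight_prime_powers_le_geometric[OF p \<open>\<beta> \<le> \<sigma>\<close>, of K] p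
    by (simp add: euler_factor_bound_def)
qed

lemma abs_euler_factor_bound_le:
  assumes p: "prime p" and large: "8 \<le> real p powr \<sigma>"
  shows "\<bar>euler_factor_bound \<beta> \<sigma> p\<bar> \<le> 2 * pretentious_term \<beta> p + 32 * real p powr (-2 * \<sigma>)"
proof -
  define r where "r = 4 / real p powr \<sigma>"
  have r: "0 < r" "r \<le> 1/2"
    using large prime_gt_0_nat[OF p] by (auto simp: r_def divide_le_eq)
  have "(real p powr \<sigma>)\<^sup>2 = real p powr (2 * \<sigma>)"
    by (simp add: power2_eq_square powr_add[symmetric])
  then have "r\<^sup>2 = 16 * real p powr (-2 * \<sigma>)"
    unfolding r_def by (simp add: power_divide powr_minus divide_inverse power_inverse)
  moreover have "r\<^sup>2 / (1 - r) \<le> 2 * r\<^sup>2"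
    using r by (simp add: divide_le_eq field_simps)
  moreover have "r\<^sup>2 / (1 - r) \<ge> 0"
    using r by simp
  moreover have "euler_factor_bound \<beta> \<sigma> p = 2 * pretentious_term \<beta> p + r\<^sup>2 / (1 - r)"
    using p large by (simp add: euler_factor_bound_def r_def)
  ultimately show ?thesis
    using pretentious_term_nonneg[OF prime_gt_0_nat[OF p], of \<beta>] by linarith
qed

lemma summable_euler_factor_bound:
  assumes D: "D_finite \<beta> f g" and "\<sigma> > 1/2"
  shows "summable (euler_factor_bound \<beta> \<sigma>)"
proof -
  define D where "D n = (if prime n then pretentious_term \<beta> n else 0)" for n
  have D_nonneg: "D n \<ge> 0" for n
    using pretentious_term_nonneg[of n \<beta>] by (simp add: D_def prime_gt_0_nat)
  have "pretentious_term \<beta> summable_on {p. prime p}"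
    using D unfolding D_finite_def pretentious_term_def .
  then have "D summable_on UNIV"
    by (rule summable_on_cong_neutral[THEN iffD1, rotated -1]) (auto simp: D_def)
  then have "summable D"
    using summable_on_UNIV_nonneg_real_iff D_nonneg by blast
  moreover have "summable (\<lambda>n. real n powr (-2 * \<sigma>))"
    using \<open>\<sigma> > 1/2\<close> by (simp add: summable_real_powr_iff)
  ultimately have "summable (\<lambda>n. 2 * D n + 32 * real n powr (-2 * \<sigma>))"
    by (intro summable_add summable_mult)
  then show ?thesis
  proof (rule summable_comparison_test'[where N = "nat \<lceil>8 powr (1 / \<sigma>)\<rceil>"])
    fix n :: nat assume n: "n \<ge> nat \<lceil>8 powr (1 / \<sigma>)\<rceil>"
    show "norm (euler_factor_bound \<beta> \<sigma> n) \<le> 2 * D n + 32 * real n powr (-2 * \<sigma>)"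
    proof (cases "prime n")
      case False
      then show ?thesis
        using D_nonneg[of n] by (simp add: euler_factor_bound_def)
    next
      case True
      have "real n \<ge> 8 powr (1 / \<sigma>)"
        using n by linarith
      then have "real n powr \<sigma> \<ge> (8 powr (1 / \<sigma>)) powr \<sigma>"
        using \<open>\<sigma> > 1/2\<close> by (intro powr_mono2) auto
      then have "real n powr \<sigma> \<ge> 8"
        using \<open>\<sigma> > 1/2\<close> by (simp add: powr_powr)
      then show ?thesis
        using abs_euler_factor_bound_le[OF True] True by (simp add: D_def)
    qed
  qed
qed

lemma summable_on_h_weight:
  assumes "D_finite \<beta> f g" and "\<sigma> > 1/2" and "\<beta> \<le> \<sigma>" and "H_finite h \<sigma>"
  shows "h_weight \<sigma> summable_on {1..}"
proof (rule summable_on_nonneg_multiplicativeI)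
  show "summable (euler_factor_bound \<beta> \<sigma>)"
    using assms(1,2) by (rule summable_euler_factor_bound)
  show "(\<Sum>k\<le>K. h_weight \<sigma> (p ^ k)) \<le> 1 + euler_factor_bound \<beta> \<sigma> p" if "prime p" for p K
    using assms(2-4) that by (intro sum_h_weight_prime_powers_le) auto
  show "euler_factor_bound \<beta> \<sigma> n \<ge> 0" for n
    using assms(2,4) by (intro euler_factor_bound_nonneg) auto
  show "h_weight \<sigma> 1 = 1"
    by (rule h_weight_1)
qed (simp_all add: h_weight_nonneg h_weight_mult)

end

theorem lemma1:
  fixes f g h :: "nat \<Rightarrow> complex" and \<beta> \<sigma> :: real
  assumes "multiplicative f" and "multiplicative g"
    and "\<And>n. n > 0 \<Longrightarrow> cmod (f n) \<le> 1" and "\<And>n. n > 0 \<Longrightarrow> cmod (g n) \<le> 1"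
    and "\<And>n. n > 0 \<Longrightarrow> g n = dirichlet_conv f h n"
    and "\<beta> > 0" and "D_finite \<beta> f g"
    and "\<sigma> > 1/2" and "\<sigma> \<ge> \<beta>"
    and "H_finite h \<sigma>"
  shows "(\<lambda>n. (cmod (h n))\<^sup>2 / real n powr \<sigma>) summable_on {1..}"
proof -
  interpret bounded_conv_factor f g h
    using assms(1-5) by unfold_locales
  have "h_weight \<sigma> summable_on {1..}"
    using assms(7-10) by (rule summable_on_h_weight)
  then show ?thesis
    by (simp only: h_weight_def[abs_def])
qed

end
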